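(* Let $G_{K,N}$ be the graph with vertex set $\{u_{ij},b_{ij}: i\in[K], j\in[N]\}$ whose edges are exactly: $u_{ij}\sim u_{ik}$ for $j\ne k$; $b_{ij}\sim u_{ik}$ for all $j,k\in[N]$; and for each $i\in[N]$ and $j\ne k$ in $[K]$: $u_{ji}\sim u_{ki}$, $b_{ji}\sim b_{ki}$, $b_{ji}\sim u_{ki}$. For $j\in[N]$ let $U^o_j=\{u_{ij}: i\in[K]\}$ and $B^o_j=\{b_{ij}:i\in[K]\}$. Then for every $i\in[N]$, the induced subgraph $G_{K,N}\big(U^o_i\cup\bigcup_{j\in[N]}B^o_j\big)$ is perfect.
   Context: A graph is perfect if in every induced subgraph the clique number equals the chromatic number. *)

theory Defs
  imports Main
begin

definition is_clique :: "('a \<Rightarrow> 'a \<Rightarrow> bool) \<Rightarrow> 'a set \<Rightarrow> bool" where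
  "is_clique E S \<longleftrightarrow> (\<forall>x\<in>S. \<forall>y\<in>S. x \<noteq> y \<longrightarrow> E x y)"

definition clique_number :: "'a set \<Rightarrow> ('a \<Rightarrow> 'a \<Rightarrow> bool) \<Rightarrow> nat" where
  "clique_number V E = Max {card S | S. S \<subseteq> V \<and> is_clique E S}"

definition proper_colouring :: "'a set \<Rightarrow> ('a \<Rightarrow> 'a \<Rightarrow> bool) \<Rightarrow> nat \<Rightarrow> ('a \<Rightarrow> nat) \<Rightarrow> bool" where
  "proper_colouring V E k f \<longleftrightarrow>
     (\<forall>x\<in>V. f x < k) \<and> (\<forall>x\<in>V. \<forall>y\<in>V. E x y \<longrightarrow> f x \<noteq> f y)"

definition chromatic_number :: "'a set \<Rightarrow> ('a \<Rightarrow> 'a \<Rightarrow> bool) \<Rightarrow> nat" where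
  "chromatic_number V E = (LEAST k. \<exists>f. proper_colouring V E k f)"

definition perfect :: "'a set \<Rightarrow> ('a \<Rightarrow> 'a \<Rightarrow> bool) \<Rightarrow> bool" where
  "perfect V E \<longleftrightarrow> finite V \<and> (\<forall>S\<subseteq>V. clique_number S E = chromatic_number S E)"

datatype vtx = U nat nat | B nat nat

definition GV :: "nat \<Rightarrow> nat \<Rightarrow> vtx set" where
  "GV K N = {U i j | i j. i \<in> {1..K} \<and> j \<in> {1..N}} \<union> {B i j | i j. i \<in> {1..K} \<and> j \<in> {1..N}}"

definition G_base :: "nat \<Rightarrow> nat \<Rightarrow> vtx \<Rightarrow> vtx \<Rightarrow> bool" where
  "G_base K N x y \<longleftrightarrow>
     (\<exists>i\<in>{1..K}. \<exists>j\<in>{1..N}. \<exists>k\<in>{1..N}. j \<noteq> k \<and> x = U i j \<and> y = U i k) \<or>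
     (\<exists>i\<in>{1..K}. \<exists>j\<in>{1..N}. \<exists>k\<in>{1..N}. x = B i j \<and> y = U i k) \<or>
     (\<exists>i\<in>{1..N}. \<exists>j\<in>{1..K}. \<exists>k\<in>{1..K}. j \<noteq> k \<and>
        ((x = U j i \<and> y = U k i) \<or> (x = B j i \<and> y = B k i) \<or> (x = B j i \<and> y = U k i)))"

definition G_adj :: "nat \<Rightarrow> nat \<Rightarrow> vtx \<Rightarrow> vtx \<Rightarrow> bool" where
  "G_adj K N x y \<longleftrightarrow> G_base K N x y \<or> G_base K N y x"

definition Uo :: "nat \<Rightarrow> nat \<Rightarrow> vtx set" where
  "Uo K j = {U i j | i. i \<in> {1..K}}"

definition Bo :: "nat \<Rightarrow> nat \<Rightarrow> vtx set" where
  "Bo K j = {B i j | i. i \<in> {1..K}}"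

end

theory Submission imports Defs begin

text \<open>Inside the vertex set \<open>U\<^sup>o\<^sub>i \<union> \<Union>\<^sub>j B\<^sup>o\<^sub>j\<close> every column is a clique, and the only edges
  between different columns join \<open>b\<^sub>a\<^sub>c\<close> (for \<open>c \<noteq> i\<close>) to \<open>u\<^sub>a\<^sub>i\<close>. Given an induced subgraph
  with clique number \<open>k\<close>, colour column \<open>i\<close> injectively with \<open>k\<close> colours; every other
  column is a clique of size at most \<open>k\<close> in which each vertex must avoid at most one colour,
  the forbidden colours are distinct, and \<open>k \<ge> 2\<close> as soon as some colour is forbidden.
  Extending the forbidden assignment to an injection and rotating it by one colour
  modulo \<open>k\<close> then yields a proper colouring of that column.\<close>

lemma inj_on_extend_into:
  assumes "finite T" "F \<subseteq> T" "inj_on p F" "p ` F \<subseteq> A" "finite A" "card T \<le> card A"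
  shows "\<exists>h. inj_on h T \<and> h ` T \<subseteq> A \<and> (\<forall>a\<in>F. h a = p a)"
proof -
  have "card (T - F) = card T - card (p ` F)"
    using assms(1-3) by (simp add: card_Diff_subset card_image finite_subset)
  also have "\<dots> \<le> card (A - p ` F)"
    using assms(4-6) by (simp add: card_Diff_subset finite_subset)
  finally obtain q where q: "q ` (T - F) \<subseteq> A - p ` F" "inj_on q (T - F)"
    using card_le_inj assms(1,5) by (metis finite_Diff)
  define h where "h a = (if a \<in> F then p a else q a)" for a
  have "inj_on h T"
    using assms(3) q unfolding h_def by (fastforce simp: inj_on_def)
  moreover have "h ` T \<subseteq> A" using assms(4) q unfolding h_def by auto
  moreover have "\<forall>a\<in>F. h a = p a" unfolding h_def by simp
  ultimately show ?thesis by blast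
qed

lemma inj_on_Suc_mod: "inj_on (\<lambda>x. Suc x mod W) {..<W}"
  by (auto simp: inj_on_def mod_Suc split: if_splits)

lemma inj_on_avoiding_values:
  fixes p :: "'a \<Rightarrow> nat"
  assumes "finite T" "F \<subseteq> T" "inj_on p F" "p ` F \<subseteq> {..<W}" "card T \<le> W"
    and "F \<noteq> {} \<Longrightarrow> 2 \<le> W"
  shows "\<exists>g. inj_on g T \<and> g ` T \<subseteq> {..<W} \<and> (\<forall>a\<in>F. g a \<noteq> p a)"
proof -
  obtain h where h: "inj_on h T" "h ` T \<subseteq> {..<W}" "\<forall>a\<in>F. h a = p a"
    using inj_on_extend_into[OF assms(1-4)] assms(5) by auto
  have "inj_on (\<lambda>a. Suc (h a) mod W) T"
    using comp_inj_on[OF h(1) inj_on_subset[OF inj_on_Suc_mod h(2)]] by (simp add: comp_def)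
  moreover have "Suc (p a) mod W \<noteq> p a" if "a \<in> F" for a
  proof -
    have "p a < W" "2 \<le> W" using that assms(4,6) by auto
    then show ?thesis by (cases "Suc (p a) = W") (auto simp: mod_Suc)
  qed
  ultimately show ?thesis using h by (intro exI[of _ "\<lambda>a. Suc (h a) mod W"]) auto
qed

lemma card_le_colours_if_clique:
  assumes "proper_colouring S E k f" "C \<subseteq> S" "is_clique E C"
  shows "card C \<le> k"
proof -
  have "inj_on f C"
    using assms unfolding proper_colouring_def is_clique_def by (meson inj_onI subsetD)
  moreover have "f ` C \<subseteq> {..<k}" using assms unfolding proper_colouring_def by auto
  ultimately show ?thesis using card_inj_on_le[of f C "{..<k}"] by simp
qed

lemma finite_clique_sizes:
  assumes "finite S"
  shows "finite {card C | C. C \<subseteq> S \<and> is_clique E C}"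
proof -
  have "{card C | C. C \<subseteq> S \<and> is_clique E C} \<subseteq> card ` Pow S" by auto
  then show ?thesis using assms by (auto intro: finite_subset)
qed

lemma card_le_clique_number:
  assumes "finite S" "C \<subseteq> S" "is_clique E C"
  shows "card C \<le> clique_number S E"
  unfolding clique_number_def using assms finite_clique_sizes by (intro Max_ge) auto

lemma clique_number_le_colours:
  assumes "finite S" "proper_colouring S E k f"
  shows "clique_number S E \<le> k"
  unfolding clique_number_def
proof (rule Max.boundedI)
  show "finite {card C | C. C \<subseteq> S \<and> is_clique E C}" using assms(1) by (rule finite_clique_sizes)
  show "{card C | C. C \<subseteq> S \<and> is_clique E C} \<noteq> {}"
    unfolding is_clique_def by blast
qed (use assms(2) card_le_colours_if_clique in blast)

lemma chromatic_number_eq_clique_number: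
  assumes "finite S" "proper_colouring S E (clique_number S E) f"
  shows "chromatic_number S E = clique_number S E"
proof (rule le_antisym)
  show "chromatic_number S E \<le> clique_number S E"
    unfolding chromatic_number_def using assms(2) by (intro Least_le) blast
  have "\<exists>g. proper_colouring S E (chromatic_number S E) g"
    unfolding chromatic_number_def by (rule LeastI_ex) (use assms(2) in blast)
  then obtain g where "proper_colouring S E (chromatic_number S E) g" ..
  then show "clique_number S E \<le> chromatic_number S E"
    using assms(1) clique_number_le_colours by blast
qed

locale clique_classes =
  fixes S :: "'a set" and E :: "'a \<Rightarrow> 'a \<Rightarrow> bool" and cls :: "'a \<Rightarrow> 'b" and hub :: 'b
    and att :: "'a \<Rightarrow> 'a"
  assumes finite: "finite S"
    and sym: "\<And>x y. E x y \<Longrightarrow> E y x"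
    and irrefl: "\<And>x. \<not> E x x"
    and class_clique: "\<And>x y. x \<in> S \<Longrightarrow> y \<in> S \<Longrightarrow> cls x = cls y \<Longrightarrow> x \<noteq> y \<Longrightarrow> E x y"
    and cross: "\<And>x y. x \<in> S \<Longrightarrow> y \<in> S \<Longrightarrow> E x y \<Longrightarrow> cls x \<noteq> cls y \<Longrightarrow> cls x \<noteq> hub \<Longrightarrow>
                  cls y = hub \<and> y = att x"
    and att_inj: "\<And>c. c \<noteq> hub \<Longrightarrow> inj_on att {x \<in> S. cls x = c}"
begin

definition part :: "'b \<Rightarrow> 'a set" where
  "part c = {x \<in> S. cls x = c}"

definition forbidden :: "'b \<Rightarrow> 'a set" where
  "forbidden c = {x \<in> part c. att x \<in> part hub \<and> E x (att x)}"

lemma card_part_le_clique_number: "card (part c) \<le> clique_number S E"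
  unfolding part_def using finite class_clique
  by (intro card_le_clique_number) (auto simp: is_clique_def)

lemma two_le_clique_number:
  assumes "x \<in> S" "y \<in> S" "E x y"
  shows "2 \<le> clique_number S E"
proof -
  have "card {x, y} \<le> clique_number S E"
    using assms finite sym by (intro card_le_clique_number) (auto simp: is_clique_def)
  with irrefl assms(3) show ?thesis by (metis card_2_iff)
qed

lemma colouring_of_part_avoiding:
  assumes "c \<noteq> hub" "inj_on h (part hub)" "h ` part hub \<subseteq> {..<clique_number S E}"
  shows "\<exists>g. inj_on g (part c) \<and> g ` part c \<subseteq> {..<clique_number S E} \<and>
             (\<forall>x\<in>forbidden c. g x \<noteq> h (att x))"
proof (rule inj_on_avoiding_values[where p = "\<lambda>x. h (att x)"])
  show "inj_on (\<lambda>x. h (att x)) (forbidden c)"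
    using att_inj[OF assms(1)] assms(2) unfolding forbidden_def part_def by (auto simp: inj_on_def)
  show "2 \<le> clique_number S E" if "forbidden c \<noteq> {}"
    using that two_le_clique_number unfolding forbidden_def part_def by blast
qed (use finite card_part_le_clique_number assms(3) in \<open>auto simp: forbidden_def part_def\<close>)

lemma proper_colouring_with_clique_number: "\<exists>f. proper_colouring S E (clique_number S E) f"
proof -
  define k where "k = clique_number S E"
  obtain h where h: "h ` part hub \<subseteq> {..<k}" "inj_on h (part hub)"
    using card_le_inj[of "part hub" "{..<k}"] card_part_le_clique_number finite
    unfolding k_def part_def by auto
  obtain g where g: "\<And>c. c \<noteq> hub \<Longrightarrow> inj_on (g c) (part c)"
      "\<And>c. c \<noteq> hub \<Longrightarrow> g c ` part c \<subseteq> {..<k}"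
      "\<And>c x. c \<noteq> hub \<Longrightarrow> x \<in> forbidden c \<Longrightarrow> g c x \<noteq> h (att x)"
    using colouring_of_part_avoiding[OF _ h(2) h(1)[unfolded k_def]] unfolding k_def by metis
  define f where "f x = (if cls x = hub then h x else g (cls x) x)" for x
  have cross_proper: "f x \<noteq> f y"
    if "x \<in> S" "y \<in> S" "E x y" "cls x \<noteq> cls y" "cls x \<noteq> hub" for x y
  proof -
    have "cls y = hub" "y = att x" using cross that by blast+
    then have "x \<in> forbidden (cls x)" using that unfolding forbidden_def part_def by auto
    then show ?thesis using g(3) that \<open>cls y = hub\<close> \<open>y = att x\<close> unfolding f_def by auto
  qed
  have "proper_colouring S E k f"
    unfolding proper_colouring_def
  proof (intro conjI ballI impI)
    show "f x < k" if "x \<in> S" for x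
      using that h(1) g(2)[of "cls x"] unfolding f_def part_def by auto
    show "f x \<noteq> f y" if "x \<in> S" "y \<in> S" "E x y" for x y
    proof (cases "cls x = cls y")
      case True
      then have "x \<in> part (cls x)" "y \<in> part (cls x)" "x \<noteq> y"
        using that irrefl unfolding part_def by auto
      then show ?thesis
        using True h(2) g(1)[of "cls x"] unfolding f_def by (auto dest: inj_onD)
    next
      case False
      then show ?thesis
        using cross_proper[OF that] cross_proper[OF that(2,1) sym[OF that(3)]] by metis
    qed
  qed
  then show ?thesis unfolding k_def by blast
qed

end

primrec vtx_col :: "vtx \<Rightarrow> nat" where
  "vtx_col (U a j) = j"
| "vtx_col (B a j) = j"

primrec vtx_row :: "vtx \<Rightarrow> nat" where
  "vtx_row (U a j) = a"
| "vtx_row (B a j) = a"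

lemma G_adj_U_U:
  "G_adj K N (U a j) (U b l) \<longleftrightarrow> a \<in> {1..K} \<and> b \<in> {1..K} \<and> j \<in> {1..N} \<and> l \<in> {1..N} \<and>
     (a = b \<and> j \<noteq> l \<or> j = l \<and> a \<noteq> b)"
  unfolding G_adj_def G_base_def by auto

lemma G_adj_B_U:
  "G_adj K N (B a j) (U b l) \<longleftrightarrow> a \<in> {1..K} \<and> b \<in> {1..K} \<and> j \<in> {1..N} \<and> l \<in> {1..N} \<and>
     (a = b \<or> j = l)"
  unfolding G_adj_def G_base_def by auto

lemma G_adj_U_B: "G_adj K N (U b l) (B a j) \<longleftrightarrow> G_adj K N (B a j) (U b l)"
  unfolding G_adj_def by auto

lemma G_adj_B_B:
  "G_adj K N (B a j) (B b l) \<longleftrightarrow> a \<in> {1..K} \<and> b \<in> {1..K} \<and> j \<in> {1..N} \<and> l = j \<and> a \<noteq> b"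
  unfolding G_adj_def G_base_def by auto

lemmas G_adj_simps = G_adj_U_U G_adj_B_U G_adj_U_B G_adj_B_B

lemma G_adj_sym: "G_adj K N x y \<Longrightarrow> G_adj K N y x"
  unfolding G_adj_def by blast

lemma G_adj_irrefl: "\<not> G_adj K N x x"
  by (cases x) (auto simp: G_adj_simps)

lemma mem_column_subgraph:
  "x \<in> Uo K i \<union> (\<Union>j\<in>{1..N}. Bo K j) \<longleftrightarrow>
     (\<exists>a\<in>{1..K}. x = U a i) \<or> (\<exists>a\<in>{1..K}. \<exists>c\<in>{1..N}. x = B a c)"
  unfolding Uo_def Bo_def by auto

lemma finite_column_subgraph: "finite (Uo K i \<union> (\<Union>j\<in>{1..N}. Bo K j))"
proof (rule finite_subset)
  show "Uo K i \<union> (\<Union>j\<in>{1..N}. Bo K j) \<subseteq>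
          (\<lambda>a. U a i) ` {1..K} \<union> (\<lambda>(a, c). B a c) ` ({1..K} \<times> {1..N})"
    unfolding Uo_def Bo_def by auto
qed simp

lemma column_subgraph_colouring:
  fixes K N i :: nat
  defines "V \<equiv> Uo K i \<union> (\<Union>j\<in>{1..N}. Bo K j)"
  assumes "i \<in> {1..N}" "S \<subseteq> V"
  shows "\<exists>f. proper_colouring S (G_adj K N) (clique_number S (G_adj K N)) f"
proof (rule clique_classes.proper_colouring_with_clique_number[where cls = vtx_col and hub = i
      and att = "\<lambda>x. U (vtx_row x) i"], unfold_locales)
  have mem: "x \<in> S \<Longrightarrow> (\<exists>a\<in>{1..K}. x = U a i) \<or> (\<exists>a\<in>{1..K}. \<exists>c\<in>{1..N}. x = B a c)" for x
    using assms(3) mem_column_subgraph unfolding V_def by blast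
  show "finite S"
    using assms(3) finite_column_subgraph unfolding V_def by (rule finite_subset)
  show "G_adj K N x y" if "x \<in> S" "y \<in> S" "vtx_col x = vtx_col y" "x \<noteq> y" for x y
    using mem[OF that(1)] mem[OF that(2)] that(3,4) assms(2) by (auto simp: G_adj_simps)
  show "vtx_col y = i \<and> y = U (vtx_row x) i"
    if "x \<in> S" "y \<in> S" "G_adj K N x y" "vtx_col x \<noteq> vtx_col y" "vtx_col x \<noteq> i" for x y
    using mem[OF that(1)] mem[OF that(2)] that(3-5) by (auto simp: G_adj_simps)
  show "inj_on (\<lambda>x. U (vtx_row x) i) {x \<in> S. vtx_col x = c}" if "c \<noteq> i" for c
    using that by (auto simp: inj_on_def dest!: mem)
qed (use G_adj_sym G_adj_irrefl in auto)

theorem lemma6: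
  fixes K N i :: nat
  assumes "i \<in> {1..N}"
  shows "perfect (Uo K i \<union> (\<Union>j\<in>{1..N}. Bo K j)) (G_adj K N)"
  unfolding perfect_def
proof (intro conjI allI impI finite_column_subgraph)
  fix S assume "S \<subseteq> Uo K i \<union> (\<Union>j\<in>{1..N}. Bo K j)"
  then obtain f where "proper_colouring S (G_adj K N) (clique_number S (G_adj K N)) f"
    using column_subgraph_colouring[OF assms] by blast
  moreover have "finite S"
    using \<open>S \<subseteq> _\<close> finite_column_subgraph by (rule finite_subset)
  ultimately show "clique_number S (G_adj K N) = chromatic_number S (G_adj K N)"
    by (metis chromatic_number_eq_clique_number)
qed

end
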